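(* Let $p>2$ be a prime and $g$ a generator of $U(\mathbb Z/p\mathbb Z)$. Let $\beta_1\in\mathbb R$ and $\beta_2>0$, let $\varphi=\cos\frac{2\pi}{p-1}+i\sin\frac{2\pi}{p-1}$ and $\tau=\cos\frac{2\pi}{p}+i\sin\frac{2\pi}{p}$, and consider the lists $$\Sigma=(\beta_1,\beta_2,\beta_2\varphi,\beta_2\varphi^2,\dots,\beta_2\varphi^{p-2}),\qquad \Sigma'=(\beta_1,\beta_2\tau,\beta_2\tau^2,\dots,\beta_2\tau^{p-1}).$$ If $C=circ(c_1,\dots,c_p)$ is the real circulant matrix whose eigenvalues $\lambda_k=\sum_{\ell=1}^p c_\ell\tau^{(k-1)(\ell-1)}$, $1\le k\le p$, are the components of $\Sigma'$ in this order, then $A=Q_gC$ is a real $g$-circulant matrix whose eigenvalues can be ordered as the components of $\Sigma$.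
   Context: $circ(c_1,\dots,c_p)$ is the circulant matrix with $(i,j)$ entry $c_{j-i+1}$ (subscripts mod $p$ in $\{1,\dots,p\}$). $Q_g$ is the $p\times p$ permutation matrix whose $(i,j)$ entry is $1$ if $j\equiv 1+(i-1)g\pmod p$ and $0$ otherwise. A $g$-circulant matrix is one in which each row is the preceding row cyclically shifted $g$ places to the right. *)

theory Defs
  imports "HOL-Number_Theory.Number_Theory" "Jordan_Normal_Form.Matrix" "Jordan_Normal_Form.Char_Poly"
begin

text \<open>Index i (0-based)
  corresponds to index i+1 of the paper. A coefficient vector (c_1,...,c_p) of the
  paper is represented by c :: nat => 'a with c l = c_(l+1).\<close>

definition circ :: "nat \<Rightarrow> (nat \<Rightarrow> 'a) \<Rightarrow> 'a mat" where
  "circ p c = mat p p (\<lambda>(i, j). c ((j + p - i) mod p))"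

definition Qperm :: "nat \<Rightarrow> nat \<Rightarrow> 'a :: {zero,one} mat" where
  "Qperm p g = mat p p (\<lambda>(i, j). if j mod p = (i * g) mod p then 1 else 0)"

definition g_circulant :: "nat \<Rightarrow> nat \<Rightarrow> 'a mat \<Rightarrow> bool" where
  "g_circulant p g A \<longleftrightarrow> A \<in> carrier_mat p p \<and>
     (\<forall>i j. i + 1 < p \<and> j < p \<longrightarrow> A $$ (i + 1, (j + g) mod p) = A $$ (i, j))"

text \<open>The multiset of eigenvalues (with algebraic multiplicity) of a square complex matrix
  equals the components of a list: the characteristic polynomial factors accordingly.\<close>
definition eigenvalues_are :: "complex mat \<Rightarrow> complex list \<Rightarrow> bool" where
  "eigenvalues_are A xs \<longleftrightarrow> char_poly A = (\<Prod>x\<leftarrow>xs. [:- x, 1:])"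

end

theory Submission
  imports Defs
begin

(* Write \<tau> = exp(2\<pi>i/p) and e\<^sub>k = (\<tau>^(k j))\<^sub>j for the Fourier vectors. Since
  A = Q\<^sub>g C has entries c((j - i g) mod p), it maps e\<^sub>k to \<lambda>\<^sub>k e\<^sub>(k g): e\<^sub>0 is an
  eigenvector for \<beta>\<^sub>1, and as g generates the units mod p, A permutes the lines through
  e\<^sub>1, ..., e\<^sub>(p-1) in a single cycle 1, g, g^2, ... of length p - 1, with weights
  \<beta>\<^sub>2 \<tau>^(g^t). The product of the weights along the cycle is \<beta>\<^sub>2^(p-1), because
  \<Sum>\<^sub>t g^t = 1 + ... + (p - 1) is divisible by the odd prime p. Hence each
  \<beta>\<^sub>2 \<phi>^m is an eigenvalue, with an explicit eigenvector built from the e\<^sub>(g^t).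
  These p eigenvectors are pairwise orthogonal, so A is diagonalizable with the
  stated eigenvalues. *)

definition unity_root :: "nat \<Rightarrow> int \<Rightarrow> complex" where
  "unity_root N a = cis (2 * pi * of_int a / of_nat N)"

lemma unity_root_0 [simp]: "unity_root N 0 = 1"
  by (simp add: unity_root_def)

lemma unity_root_add: "unity_root N (a + b) = unity_root N a * unity_root N b"
  unfolding unity_root_def cis_mult by (simp add: distrib_left add_divide_distrib)

lemma unity_root_power: "unity_root N a ^ n = unity_root N (a * int n)"
  unfolding unity_root_def DeMoivre by (simp add: field_simps)

lemma cnj_unity_root: "cnj (unity_root N a) = unity_root N (- a)"
  by (simp add: unity_root_def cis_cnj)

lemma cis_power_eq_unity_root: "cis (2 * pi / real N) ^ n = unity_root N (int n)"
  unfolding unity_root_def DeMoivre by (simp add: field_simps)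

lemma unity_root_eq_1_iff:
  assumes "N > 0"
  shows "unity_root N a = 1 \<longleftrightarrow> int N dvd a"
proof
  assume "unity_root N a = 1"
  then have "cos (2 * pi * of_int a / of_nat N) = 1"
    by (simp add: unity_root_def complex_eq_iff)
  then obtain n :: int where "2 * pi * of_int a / of_nat N = n * 2 * pi"
    using cos_one_2pi_int by (metis mult.commute mult.left_commute of_int_mult of_int_numeral)
  then have "real_of_int a = of_int n * of_nat N"
    using assms by (simp add: field_simps)
  then have "a = n * int N"
    by (metis of_int_eq_iff of_int_mult of_int_of_nat_eq)
  then show "int N dvd a" by simp
next
  assume "int N dvd a"
  then obtain n where "a = int N * n" by blast
  then have "2 * pi * of_int a / of_nat N = 2 * pi * of_int n"
    using assms by simp
  then show "unity_root N a = 1"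
    by (simp add: unity_root_def)
qed

lemma unity_root_cong:
  assumes "N > 0" and "[a = b] (mod int N)"
  shows "unity_root N a = unity_root N b"
proof -
  have "unity_root N (a - b) = 1"
    using assms by (simp add: unity_root_eq_1_iff cong_iff_dvd_diff)
  then show ?thesis
    using unity_root_add[of N "a - b" b] by simp
qed

lemma sum_unity_root:
  assumes "N > 0"
  shows "(\<Sum>j<N. unity_root N (a * int j)) = (if int N dvd a then of_nat N else 0)"
proof (cases "int N dvd a")
  case True
  then have "unity_root N (a * int j) = 1" for j
    using unity_root_eq_1_iff[OF assms] by simp
  then show ?thesis
    using True by simp
next
  case False
  then have "unity_root N a \<noteq> 1" and "unity_root N a ^ N = 1"
    using assms by (simp_all add: unity_root_eq_1_iff unity_root_power)
  then have "(\<Sum>j<N. unity_root N a ^ j) = 0"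
    by (simp add: geometric_sum)
  then show ?thesis
    using False by (simp add: unity_root_power)
qed

lemma sum_cyclic_shift:
  fixes h :: "nat \<Rightarrow> 'a :: cancel_comm_monoid_add"
  assumes "h n = h 0"
  shows "(\<Sum>t<n. h (Suc t)) = (\<Sum>t<n. h t)"
proof -
  have "h 0 + (\<Sum>t<n. h (Suc t)) = (\<Sum>t<Suc n. h t)"
    by (rule sum.lessThan_Suc_shift[symmetric])
  also have "\<dots> = h 0 + (\<Sum>t<n. h t)"
    using assms by (simp add: add.commute)
  finally show ?thesis
    by simp
qed

lemma int_cyclic_diff:
  assumes "p > 0"
  shows "int ((j + p - x mod p) mod p) = (int j - int x) mod int p"
proof -
  have "x mod p < p"
    using assms by simp
  then have "int (j + p - x mod p) = int j + int p - int (x mod p)"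
    by simp
  then have "int ((j + p - x mod p) mod p) = (int j + int p - int x mod int p) mod int p"
    by (simp add: zmod_int)
  also have "\<dots> = ((int j - int x) + int p) mod int p"
    by (simp add: mod_simps algebra_simps)
  also have "\<dots> = (int j - int x) mod int p"
    by simp
  finally show ?thesis .
qed

lemma index_mult_mat_sum:
  assumes "A \<in> carrier_mat nr n" and "B \<in> carrier_mat n nc" and "i < nr" and "j < nc"
  shows "(A * B) $$ (i, j) = (\<Sum>k<n. A $$ (i, k) * B $$ (k, j))"
  using assms by (auto simp: scalar_prod_def lessThan_atLeast0 intro!: sum.cong)

lemma orthogonal_columns_left_inverse:
  fixes P :: "complex mat"
  assumes P: "P \<in> carrier_mat n n"
    and orth: "\<And>a b. a < n \<Longrightarrow> b < n \<Longrightarrow>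
      (\<Sum>j<n. cnj (P $$ (j, a)) * P $$ (j, b)) = (if a = b then r a else 0)"
    and nonzero: "\<And>a. a < n \<Longrightarrow> r a \<noteq> 0"
  shows "mat n n (\<lambda>(a, j). cnj (P $$ (j, a)) / r a) * P = 1\<^sub>m n"
proof (rule eq_matI)
  fix a b
  assume "a < dim_row (1\<^sub>m n :: complex mat)" and "b < dim_col (1\<^sub>m n :: complex mat)"
  then have ab: "a < n" "b < n" by auto
  have "(mat n n (\<lambda>(a, j). cnj (P $$ (j, a)) / r a) * P) $$ (a, b)
      = (\<Sum>j<n. mat n n (\<lambda>(a, j). cnj (P $$ (j, a)) / r a) $$ (a, j) * P $$ (j, b))"
    by (rule index_mult_mat_sum) (use P ab in auto)
  also have "\<dots> = (\<Sum>j<n. cnj (P $$ (j, a)) * P $$ (j, b)) / r a"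
    using ab by (simp add: sum_divide_distrib)
  finally show "(mat n n (\<lambda>(a, j). cnj (P $$ (j, a)) / r a) * P) $$ (a, b) = 1\<^sub>m n $$ (a, b)"
    using orth[OF ab] nonzero[OF ab(1)] ab by (cases "a = b") simp_all
qed (use P in auto)

lemma char_poly_eq_if_eigenbasis:
  fixes A P Q :: "'a :: field mat"
  assumes A: "A \<in> carrier_mat n n" and P: "P \<in> carrier_mat n n" and Q: "Q \<in> carrier_mat n n"
    and QP: "Q * P = 1\<^sub>m n"
    and eigen: "\<And>i b. i < n \<Longrightarrow> b < n \<Longrightarrow>
      (\<Sum>j<n. A $$ (i, j) * P $$ (j, b)) = f b * P $$ (i, b)"
  shows "char_poly A = (\<Prod>i\<leftarrow>[0..<n]. [:- f i, 1:])"
proof -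
  let ?D = "mat_diag n f"
  have PQ: "P * Q = 1\<^sub>m n"
    by (rule mat_mult_left_right_inverse[OF Q P QP])
  have AP: "A * P = P * ?D"
  proof (rule eq_matI)
    fix i b
    assume "i < dim_row (P * ?D)" and "b < dim_col (P * ?D)"
    then have ib: "i < n" "b < n"
      using P by (auto simp: mat_diag_def)
    show "(A * P) $$ (i, b) = (P * ?D) $$ (i, b)"
      unfolding index_mult_mat_sum[OF A P ib]
      using eigen[OF ib] P ib by (simp add: mat_diag_mult_right[OF P] mult.commute)
  qed (use A P in \<open>auto simp: mat_diag_def\<close>)
  have "A = A * (P * Q)"
    using A PQ by simp
  also have "\<dots> = P * ?D * Q"
    using A P Q AP by (simp add: assoc_mult_mat[symmetric, of A n n P n Q n])
  finally have "similar_mat A ?D"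
    by (intro similar_matI[where P = P and Q = Q and n = n]) (use A P Q PQ QP in auto)
  then have "char_poly A = char_poly ?D"
    by (rule char_poly_similar)
  also have "\<dots> = (\<Prod>a\<leftarrow>diag_mat ?D. [:- a, 1:])"
    by (rule char_poly_upper_triangular[of _ n]) (auto simp: upper_triangular_def mat_diag_def)
  also have "diag_mat ?D = map f [0..<n]"
    by (simp add: diag_mat_def mat_diag_def)
  finally show ?thesis
    by (simp add: comp_def)
qed

lemma Qperm_circ_index:
  assumes "i < p" and "j < p"
  shows "(Qperm p g * circ p c :: 'a :: comm_ring_1 mat) $$ (i, j) = c ((j + p - i * g mod p) mod p)"
proof -
  have "(Qperm p g * circ p c :: 'a mat) $$ (i, j)
      = (\<Sum>l<p. (Qperm p g :: 'a mat) $$ (i, l) * circ p c $$ (l, j))"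
    by (rule index_mult_mat_sum) (auto simp: Qperm_def circ_def assms)
  also have "\<dots> = (\<Sum>l<p. if l = i * g mod p then c ((j + p - i * g mod p) mod p) else 0)"
    by (rule sum.cong) (auto simp: Qperm_def circ_def assms)
  also have "\<dots> = c ((j + p - i * g mod p) mod p)"
    using assms by simp
  finally show ?thesis .
qed

lemma dim_row_Qperm: "dim_row (Qperm p g) = p"
  by (simp add: Qperm_def)

lemma dim_col_circ: "dim_col (circ p c) = p"
  by (simp add: circ_def)

lemma map_mat_of_real_Qperm_circ:
  "map_mat complex_of_real (Qperm p g * circ p c) = Qperm p g * circ p (\<lambda>l. complex_of_real (c l))"
  by (rule eq_matI) (simp_all add: Qperm_circ_index dim_row_Qperm dim_col_circ del: index_mult_mat(1))

lemma g_circulant_Qperm_circ: "g_circulant p g (Qperm p g * circ p c :: 'a :: comm_ring_1 mat)"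
  unfolding g_circulant_def
proof (intro conjI allI impI)
  show "Qperm p g * circ p c \<in> carrier_mat p p"
    by (auto simp: Qperm_def circ_def)
  fix i j
  assume ij: "i + 1 < p \<and> j < p"
  then have p: "p > 0" by simp
  have "int (((j + g) mod p + p - (i + 1) * g mod p) mod p)
      = (int ((j + g) mod p) - int ((i + 1) * g)) mod int p"
    by (rule int_cyclic_diff[OF p])
  also have "\<dots> = (int j - int i * int g) mod int p"
    by (simp add: zmod_int mod_simps algebra_simps)
  also have "\<dots> = int ((j + p - i * g mod p) mod p)"
    using int_cyclic_diff[OF p, of j "i * g"] by simp
  finally have "((j + g) mod p + p - (i + 1) * g mod p) mod p = (j + p - i * g mod p) mod p"
    by simp
  then show "(Qperm p g * circ p c :: 'a mat) $$ (i + 1, (j + g) mod p) = (Qperm p g * circ p c) $$ (i, j)"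
    using ij by (simp add: Qperm_circ_index)
qed

lemma Qperm_circ_mult_fourier:
  fixes c :: "nat \<Rightarrow> complex"
  assumes i: "i < p"
  shows "(\<Sum>j<p. (Qperm p g * circ p c) $$ (i, j) * unity_root p (int k * int j))
       = unity_root p (int k * int g * int i) * (\<Sum>l<p. c l * unity_root p (int k * int l))"
proof -
  have p: "p > 0" using i by simp
  define d where "d j = (j + p - i * g mod p) mod p" for j
  have int_d: "int (d j) = (int j - int i * int g) mod int p" for j
    unfolding d_def using int_cyclic_diff[OF p] by simp
  have "(\<Sum>j<p. (Qperm p g * circ p c) $$ (i, j) * unity_root p (int k * int j))
      = (\<Sum>j<p. c (d j) * unity_root p (int k * int j))"
    using i by (simp add: Qperm_circ_index d_def)
  also have "\<dots> = (\<Sum>l<p. c l * unity_root p (int k * int l + int k * int g * int i))"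
  proof (rule sum.reindex_bij_witness[of _ "\<lambda>l. (l + i * g) mod p" d])
    fix j :: nat
    assume "j \<in> {..<p}"
    then have "int ((d j + i * g) mod p) = int j mod int p"
      by (simp add: zmod_int int_d mod_simps)
    with \<open>j \<in> {..<p}\<close> show "(d j + i * g) mod p = j"
      by simp
    show "d j \<in> {..<p}"
      using p by (simp add: d_def)
    have "[int k * int (d j) = int k * (int j - int i * int g)] (mod int p)"
      unfolding int_d by (intro cong_mult cong_refl) simp
    then have "[int k * int (d j) + int k * int g * int i = int k * int j] (mod int p)"
      using cong_add[OF _ cong_refl[of "int k * int g * int i"]] by (fastforce simp: algebra_simps)
    then show "c (d j) * unity_root p (int k * int (d j) + int k * int g * int i)
        = c (d j) * unity_root p (int k * int j)"
      using unity_root_cong[OF p] by metis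
  next
    fix l :: nat
    assume "l \<in> {..<p}"
    then have "int (d ((l + i * g) mod p)) = int l mod int p"
      by (simp add: zmod_int int_d mod_simps)
    with \<open>l \<in> {..<p}\<close> show "d ((l + i * g) mod p) = l"
      by simp
    show "(l + i * g) mod p \<in> {..<p}"
      using p by simp
  qed
  also have "\<dots> = unity_root p (int k * int g * int i) * (\<Sum>l<p. c l * unity_root p (int k * int l))"
    by (simp add: sum_distrib_left unity_root_add mult_ac)
  finally show ?thesis .
qed

locale odd_prime_primroot =
  fixes p g :: nat
  assumes prime_p: "prime p" and p_gt_2: "p > 2" and primroot_g: "residue_primroot p g"
begin

definition orbit :: "nat \<Rightarrow> nat" where
  "orbit t = g ^ t mod p"

definition orbit_sum :: "nat \<Rightarrow> nat" where
  "orbit_sum t = (\<Sum>s<t. orbit s)"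

lemma p_pos: "p > 0"
  using p_gt_2 by simp

lemma p_not_dvd_g: "\<not> p dvd g"
  using primroot_g prime_p unfolding residue_primroot_def by (metis coprime_absorb_left not_prime_unit)

lemma bij_betw_orbit: "bij_betw orbit {..<p - 1} {0<..<p}"
  using residue_primroot_is_generator[OF _ primroot_g] prime_p p_gt_2
  unfolding orbit_def by (simp add: totient_prime totatives_prime)

lemma inj_on_orbit: "inj_on orbit {..<p - 1}"
  using bij_betw_orbit by (rule bij_betw_imp_inj_on)

lemma orbit_bounds: "0 < orbit t" "orbit t < p"
proof -
  have "\<not> p dvd g ^ t"
    using p_not_dvd_g prime_p prime_dvd_power by blast
  then show "0 < orbit t"
    unfolding orbit_def by (simp add: dvd_eq_mod_eq_0)
  show "orbit t < p"
    unfolding orbit_def using p_pos by simp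
qed

lemma orbit_0: "orbit 0 = 1"
  unfolding orbit_def using p_gt_2 by simp

lemma orbit_period: "orbit (p - 1) = 1"
  using fermat_theorem[OF prime_p p_not_dvd_g] p_gt_2 unfolding orbit_def cong_def by simp

lemma orbit_Suc: "orbit (Suc t) = orbit t * g mod p"
  unfolding orbit_def by (metis mod_mult_left_eq mult.commute power_Suc)

lemma orbit_sum_Suc: "orbit_sum (Suc t) = orbit_sum t + orbit t"
  unfolding orbit_sum_def by simp

lemma p_dvd_orbit_sum: "p dvd orbit_sum (p - 1)"
proof -
  have "orbit_sum (p - 1) = \<Sum>{0<..<p}"
    unfolding orbit_sum_def bij_betw_imp_surj_on[OF bij_betw_orbit, symmetric]
    using sum.reindex[OF inj_on_orbit, of "\<lambda>x. x"] by simp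
  also have "\<dots> = \<Sum>{1..p - 1}"
    by (rule sum.cong) auto
  finally have "2 * orbit_sum (p - 1) = p * (p - 1)"
    using double_gauss_sum_from_Suc_0[of "p - 1", where 'a = nat] p_pos by simp
  moreover obtain q where "p - 1 = 2 * q"
    using prime_p p_gt_2 p_pos by (metis prime_odd_nat odd_two_times_div_two_nat dvd_def)
  ultimately show ?thesis
    by simp
qed

end

locale Qperm_circ_spectrum = odd_prime_primroot +
  fixes c :: "nat \<Rightarrow> complex" and b1 b2 :: complex
  assumes circ_eigenvalue_0: "(\<Sum>l<p. c l) = b1"
    and circ_eigenvalue_nonzero_index: "\<And>k. 0 < k \<Longrightarrow> k < p \<Longrightarrow>
      (\<Sum>l<p. c l * unity_root p (int k * int l)) = b2 * unity_root p (int k)"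
begin

abbreviation A :: "complex mat" where
  "A \<equiv> Qperm p g * circ p c"

(* \<phi>^(-m t) \<tau>^(g^0 + ... + g^(t-1)) solves \<tau>^(g^t) w(t) = \<phi>^m w(t+1) with w(0) = 1. *)
definition weight :: "nat \<Rightarrow> nat \<Rightarrow> complex" where
  "weight m t = unity_root (p - 1) (- int m * int t) * unity_root p (int (orbit_sum t))"

definition eigvec :: "nat \<Rightarrow> nat \<Rightarrow> complex" where
  "eigvec m j = (\<Sum>t<p - 1. weight m t * unity_root p (int (orbit t) * int j))"

definition eigenbasis :: "complex mat" where
  "eigenbasis = mat p p (\<lambda>(j, b). if b = 0 then 1 else eigvec (b - 1) j)"

definition eigenvalue :: "nat \<Rightarrow> complex" where
  "eigenvalue b = (if b = 0 then b1 else b2 * unity_root (p - 1) (int (b - 1)))"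

lemma weight_Suc:
  "unity_root p (int (orbit t)) * weight m t = unity_root (p - 1) (int m) * weight m (Suc t)"
proof -
  have "unity_root (p - 1) (- int m * int t) = unity_root (p - 1) (int m) * unity_root (p - 1) (- int m * int (Suc t))"
    by (simp add: unity_root_add[symmetric] algebra_simps)
  then show ?thesis
    unfolding weight_def orbit_sum_Suc by (simp add: unity_root_add mult_ac)
qed

lemma weight_period: "weight m (p - 1) = weight m 0"
proof -
  have "unity_root (p - 1) (- int m * int (p - 1)) = 1"
    using p_gt_2 by (simp add: unity_root_eq_1_iff)
  moreover have "unity_root p (int (orbit_sum (p - 1))) = 1"
    using p_pos p_dvd_orbit_sum by (simp add: unity_root_eq_1_iff)
  ultimately show ?thesis
    by (simp add: weight_def orbit_sum_def)
qed

lemma cnj_weight_mult_weight: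
  "cnj (weight a t) * weight m t = unity_root (p - 1) ((int a - int m) * int t)"
proof -
  have "cnj (weight a t) * weight m t
      = (unity_root (p - 1) (int a * int t) * unity_root (p - 1) (- int m * int t))
        * (unity_root p (- int (orbit_sum t)) * unity_root p (int (orbit_sum t)))"
    by (simp add: weight_def cnj_unity_root mult_ac)
  also have "\<dots> = unity_root (p - 1) ((int a - int m) * int t)"
    by (simp only: unity_root_add[symmetric]) (simp add: algebra_simps)
  finally show ?thesis .
qed

lemma Qperm_circ_mult_fourier_orbit:
  assumes "i < p"
  shows "(\<Sum>j<p. A $$ (i, j) * unity_root p (int (orbit t) * int j))
       = b2 * unity_root p (int (orbit t)) * unity_root p (int (orbit (Suc t)) * int i)"
proof -
  have "[int (orbit t) * int g * int i = int (orbit (Suc t)) * int i] (mod int p)"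
    unfolding orbit_Suc cong_def by (simp add: zmod_int mod_simps)
  then have "unity_root p (int (orbit t) * int g * int i) = unity_root p (int (orbit (Suc t)) * int i)"
    by (rule unity_root_cong[OF p_pos])
  then show ?thesis
    using assms orbit_bounds by (simp add: Qperm_circ_mult_fourier circ_eigenvalue_nonzero_index)
qed

lemma eigvec_eigen:
  assumes "i < p"
  shows "(\<Sum>j<p. A $$ (i, j) * eigvec m j) = b2 * unity_root (p - 1) (int m) * eigvec m i"
proof -
  have "(\<Sum>j<p. A $$ (i, j) * eigvec m j)
      = (\<Sum>t<p - 1. weight m t * (\<Sum>j<p. A $$ (i, j) * unity_root p (int (orbit t) * int j)))"
    unfolding eigvec_def sum_distrib_left by (subst sum.swap) (simp add: mult_ac)
  also have "\<dots> = (\<Sum>t<p - 1. weight m t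
      * (b2 * unity_root p (int (orbit t)) * unity_root p (int (orbit (Suc t)) * int i)))"
    using assms by (simp only: Qperm_circ_mult_fourier_orbit)
  also have "\<dots> = (\<Sum>t<p - 1. b2 * unity_root (p - 1) (int m)
      * (weight m (Suc t) * unity_root p (int (orbit (Suc t)) * int i)))"
  proof (rule sum.cong[OF refl])
    fix t
    let ?u = "unity_root p (int (orbit t))" and ?v = "unity_root p (int (orbit (Suc t)) * int i)"
    have "weight m t * (b2 * ?u * ?v) = b2 * ?v * (?u * weight m t)"
      by (simp add: ac_simps)
    also have "\<dots> = b2 * ?v * (unity_root (p - 1) (int m) * weight m (Suc t))"
      by (simp only: weight_Suc)
    finally show "weight m t * (b2 * ?u * ?v) = b2 * unity_root (p - 1) (int m) * (weight m (Suc t) * ?v)"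
      by (simp add: ac_simps)
  qed
  also have "\<dots> = b2 * unity_root (p - 1) (int m)
      * (\<Sum>t<p - 1. weight m (Suc t) * unity_root p (int (orbit (Suc t)) * int i))"
    by (simp add: sum_distrib_left)
  also have "(\<Sum>t<p - 1. weight m (Suc t) * unity_root p (int (orbit (Suc t)) * int i)) = eigvec m i"
    unfolding eigvec_def by (rule sum_cyclic_shift) (use weight_period orbit_period orbit_0 in simp)
  finally show ?thesis .
qed

lemma orbit_fourier_orthogonal:
  assumes "s < p - 1" and "t < p - 1"
  shows "(\<Sum>j<p. cnj (unity_root p (int (orbit s) * int j)) * unity_root p (int (orbit t) * int j))
       = (if s = t then of_nat p else 0)"
proof -
  have "int p dvd int (orbit t) - int (orbit s) \<longleftrightarrow> s = t"
  proof
    assume "int p dvd int (orbit t) - int (orbit s)"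
    then have "orbit t = orbit s"
      using orbit_bounds[of s] orbit_bounds[of t] by (simp add: mod_eq_dvd_iff[symmetric])
    then show "s = t"
      using inj_on_orbit assms by (auto dest: inj_onD)
  qed simp
  then show ?thesis
    using sum_unity_root[OF p_pos, of "int (orbit t) - int (orbit s)"]
    by (simp add: cnj_unity_root unity_root_add[symmetric] algebra_simps)
qed

lemma sum_eigvec: "(\<Sum>j<p. eigvec m j) = 0"
proof -
  have "(\<Sum>j<p. unity_root p (int (orbit t) * int j)) = 0" for t
  proof -
    have "\<not> int p dvd int (orbit t)"
      using orbit_bounds[of t] by (simp add: nat_dvd_not_less)
    then show ?thesis
      using sum_unity_root[OF p_pos] by simp
  qed
  then show ?thesis
    unfolding eigvec_def by (subst sum.swap) (simp add: sum_distrib_left[symmetric])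
qed

lemma eigvec_orthogonal:
  assumes "a < p - 1" and "m < p - 1"
  shows "(\<Sum>j<p. cnj (eigvec a j) * eigvec m j) = (if a = m then of_nat (p * (p - 1)) else 0)"
proof -
  let ?e = "\<lambda>t j. unity_root p (int (orbit t) * int j)"
  have "(\<Sum>j<p. cnj (eigvec a j) * eigvec m j)
      = (\<Sum>j<p. \<Sum>t<p - 1. \<Sum>s<p - 1. cnj (weight a s) * weight m t * (cnj (?e s j) * ?e t j))"
    unfolding eigvec_def by (simp add: sum_product mult_ac)
  also have "\<dots> = (\<Sum>t<p - 1. \<Sum>s<p - 1. cnj (weight a s) * weight m t * (\<Sum>j<p. cnj (?e s j) * ?e t j))"
    by (simp add: sum_distrib_left sum.swap[of _ "{..<p}"])
  also have "\<dots> = (\<Sum>t<p - 1. \<Sum>s<p - 1. if s = t then of_nat p * (cnj (weight a t) * weight m t) else 0)"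
    by (intro sum.cong refl) (simp add: orbit_fourier_orthogonal)
  also have "\<dots> = (\<Sum>t<p - 1. of_nat p * (cnj (weight a t) * weight m t))"
    by (simp add: sum.delta)
  also have "\<dots> = of_nat p * (\<Sum>t<p - 1. unity_root (p - 1) ((int a - int m) * int t))"
    by (simp only: cnj_weight_mult_weight sum_distrib_left)
  also have "\<dots> = (if a = m then of_nat (p * (p - 1)) else 0)"
  proof -
    have "int (p - 1) dvd int a - int m \<longleftrightarrow> a = m"
      using assms by (auto simp: mod_eq_dvd_iff[symmetric])
    then show ?thesis
      using sum_unity_root[of "p - 1" "int a - int m"] p_gt_2 by simp
  qed
  finally show ?thesis .
qed

lemma eigenbasis_orthogonal:
  assumes "a < p" and "b < p"
  shows "(\<Sum>j<p. cnj (eigenbasis $$ (j, a)) * eigenbasis $$ (j, b))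
       = (if a = b then (if a = 0 then of_nat p else of_nat (p * (p - 1))) else 0)"
proof -
  have "(\<Sum>j<p. cnj (eigvec (a - 1) j)) = 0"
    using sum_eigvec by (simp flip: cnj_sum)
  moreover have "a - 1 = b - 1 \<longleftrightarrow> a = b" if "a \<noteq> 0" "b \<noteq> 0"
    using that by auto
  ultimately show ?thesis
    using assms sum_eigvec eigvec_orthogonal[of "a - 1" "b - 1"]
    by (cases "a = 0"; cases "b = 0") (simp_all add: eigenbasis_def)
qed

lemma eigenbasis_eigen:
  assumes "i < p" and "b < p"
  shows "(\<Sum>j<p. A $$ (i, j) * eigenbasis $$ (j, b)) = eigenvalue b * eigenbasis $$ (i, b)"
proof (cases "b = 0")
  case True
  then show ?thesis
    using assms Qperm_circ_mult_fourier[of i p g c 0] circ_eigenvalue_0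
    by (simp add: eigenbasis_def eigenvalue_def)
next
  case False
  then show ?thesis
    using assms eigvec_eigen[of i "b - 1"] by (simp add: eigenbasis_def eigenvalue_def)
qed

lemma char_poly_Qperm_circ: "char_poly A = (\<Prod>b\<leftarrow>[0..<p]. [:- eigenvalue b, 1:])"
proof -
  let ?r = "\<lambda>a. if a = 0 then of_nat p else of_nat (p * (p - 1)) :: complex"
  have inverse: "mat p p (\<lambda>(a, j). cnj (eigenbasis $$ (j, a)) / ?r a) * eigenbasis = 1\<^sub>m p"
    using eigenbasis_orthogonal p_gt_2
    by (intro orthogonal_columns_left_inverse) (auto simp: eigenbasis_def)
  show ?thesis
    by (rule char_poly_eq_if_eigenbasis[OF _ _ _ inverse eigenbasis_eigen])
      (auto simp: eigenbasis_def Qperm_def circ_def)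
qed

end

theorem mainTheorem9:
  fixes p g :: nat and \<beta>1 \<beta>2 :: real and c :: "nat \<Rightarrow> real"
  assumes "prime p" and "p > 2"
    and "residue_primroot p g"
    and "\<beta>2 > 0"
    and eig: "\<forall>k<p. (\<Sum>l<p. complex_of_real (c l) * cis (2 * pi / p) ^ (k * l))
              = (complex_of_real \<beta>1 # map (\<lambda>m. complex_of_real \<beta>2 * cis (2 * pi / p) ^ m) [1..<p]) ! k"
  shows "g_circulant p g (Qperm p g * circ p c :: real mat) \<and>
         eigenvalues_are (map_mat complex_of_real (Qperm p g * circ p c))
           (complex_of_real \<beta>1 # map (\<lambda>m. complex_of_real \<beta>2 * cis (2 * pi / (p - 1)) ^ m) [0..<p - 1])"
proof -
  interpret odd_prime_primroot p g
    using assms by unfold_locales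
  have "Qperm_circ_spectrum p g (\<lambda>l. complex_of_real (c l)) \<beta>1 \<beta>2"
  proof unfold_locales
    show "(\<Sum>l<p. complex_of_real (c l)) = \<beta>1"
      using eig p_pos by auto
    show "(\<Sum>l<p. complex_of_real (c l) * unity_root p (int k * int l)) = \<beta>2 * unity_root p (int k)"
      if "0 < k" "k < p" for k
      using eig[rule_format, OF \<open>k < p\<close>] that
      by (simp add: nth_Cons' cis_power_eq_unity_root)
  qed
  then interpret Qperm_circ_spectrum p g "\<lambda>l. complex_of_real (c l)" \<beta>1 \<beta>2 .
  have eigenvalues: "complex_of_real \<beta>1 # map (\<lambda>m. complex_of_real \<beta>2 * cis (2 * pi / (p - 1)) ^ m) [0..<p - 1]
      = map eigenvalue [0..<p]"
  proof -
    have "[0..<p] = 0 # map Suc [0..<p - 1]"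
      using p_pos by (cases p) (simp_all add: map_Suc_upt upt_conv_Cons)
    then show ?thesis
      using cis_power_eq_unity_root[of "p - 1"] by (simp add: eigenvalue_def)
  qed
  show ?thesis
    using g_circulant_Qperm_circ char_poly_Qperm_circ
    unfolding eigenvalues_are_def map_mat_of_real_Qperm_circ eigenvalues by (simp add: comp_def)
qed

end
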